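(* Let $\mathcal F=\{K_4,C_5,C_6,C_7,B_5\}$ and let $G$ be an $\mathcal F$-free graph. If $G$ contains one of the configurations (C1)–(C13) below, and $H$ is the subgraph of $G$ induced by the vertices of that configuration, then $H$ is $(\mathcal F,4)$-boundary-reducible in $G$ with reduced part $R=V(H)\setminus B$, where $B$ is the boundary specified for the configuration (empty if none is specified). (C1) a vertex of degree at most $2$. (C2) three $3$-vertices $u,v,w$ with $uv,vw\in E(G)$. (C3) a triangle all of whose vertices are $3$-vertices. (C4) a diamond $D=\mathrm{Dia}(4-3,4,5^+)$ together with a $3$-vertex $u\notin V(D)$ adjacent to the middle $4$-vertex of $D$; boundary: the side $5^+$-vertex of $D$. (C5) $\mathrm{Dia}(3-3,5^+,5^+)$; boundary: its two side vertices. (C6) $\mathrm{Dia}(3-5^+,3,5^+)$; boundary: its middle $5^+$-vertex and its side $5^+$-vertex. (C7) $\mathrm{Dia}(5-4,3,3)$. (C8) $D_1=\mathrm{Dia}(4-4,5,3)$ and $D_2=\mathrm{Dia}(5-3,4,4^+)$, where the side $5$-vertex of $D_1$ is the middle $5$-vertex of $D_2$; $D_2$ has side vertices $s$ (a $4$-vertex) and $v$ (a $4^+$-vertex); boundary: $v$. (C9) two diamonds $D_1,D_2$, each $\mathrm{Dia}(3-4,4,5^+)$, such that the middle $4$-vertex of $D_1$ is adjacent to the middle $4$-vertex of $D_2$; boundary: the side $5^+$-vertices of $D_1$ and $D_2$. (C10) $D_1=\mathrm{Dia}(4-3,5^+,5)$ with side vertices $p$ (a $5^+$-vertex) and $q$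 (a $5$-vertex), and $D_2=\mathrm{Dia}(5-3,4,4^+)$ whose middle $5$-vertex is $q$, with side vertices a $4$-vertex and a $4^+$-vertex $v$; boundary: $p$ and $v$. (C11) $\mathrm{Dia}(4-4,3,4)$ together with a $3$-vertex outside it adjacent to one of its middle $4$-vertices. (C12) $D_1=\mathrm{Dia}(3-4,4,5^+)$ and $D_2=\mathrm{Dia}(4-4,4,3)$, where the middle $4$-vertex of $D_1$ is adjacent to a middle $4$-vertex of $D_2$; boundary: the side $5^+$-vertex of $D_1$. (C13) $D_1=\mathrm{Dia}(3-5,5,5)$ and $D_2,D_3$, each $\mathrm{Dia}(5-3,4,5^+)$, where the two side vertices of $D_1$ are the middle $5$-vertices of $D_2$ and of $D_3$, respectively; boundary: the side $5^+$-vertices of $D_2$ and $D_3$.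
   Context: $B_5$ is the book on $5$ vertices: an edge $xy$ plus three further vertices each adjacent to exactly $x$ and $y$. $\mathcal F$-free graph: no subgraph isomorphic to a member of $\mathcal F$. All degrees are degrees in $G$; a $d$-vertex ($d^+$-vertex) is a vertex of degree exactly $d$ (at least $d$). A diamond is a subgraph isomorphic to $K_4$ minus an edge; its two vertices of degree $3$ in it are middle vertices, the other two are side vertices. $\mathrm{Dia}(a-b,c,d)$ denotes a diamond whose middle vertices have degrees $a,b$ and whose side vertices have degrees $c,d$; an entry $s^+$ means degree at least $s$. Vertices of distinct pieces of a configuration are distinct except where explicitly identified. For an induced subgraph $H$ of $G$ and $\emptyset\neq R\subseteq V(H)$, $\deg_R(v)$ is the degree of $v$ in $G[R]$. A set $I\subseteq V(H)$ is $\mathcal F$-free if adding to $H$ a new vertex adjacent exactly to $I$ creates no subgraph isomorphic to a member of $\mathcal F$. For $f:R\to\mathbb Z$, an $f$-assignment is a list assignment $L$ on $R$ with $|L(v)|\ge f(v)$; $f\downarrow v$ is $f$ changed to value $1$ at $v$; $1_I$ is the indicator of $I$. $H$ is $(\mathcal F,k)$-boundary-reducible in $G$ with reduced part $R$ if (FIX) for every $v\in R$, $H[R]$ is properly $L$-colorable for every $((k-\deg_G+\deg_R)\downarrow v)$-assignment $L$, and (FORB) for every $\mathcal F$-free $I\subseteq R$ with $|I|\le k-2$, $H[R]$ is properly $L$-colorable for every $(k-\deg_G+\deg_R-1_I)$-assignment $L$. *)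

theory Defs
  imports Main
begin

definition graph :: "'a set \<Rightarrow> ('a \<Rightarrow> 'a \<Rightarrow> bool) \<Rightarrow> bool" where
  "graph V E \<longleftrightarrow> finite V \<and> (\<forall>u v. E u v \<longrightarrow> u \<in> V \<and> v \<in> V)
     \<and> (\<forall>u v. E u v \<longrightarrow> E v u) \<and> (\<forall>v. \<not> E v v)"

definition deg :: "'a set \<Rightarrow> ('a \<Rightarrow> 'a \<Rightarrow> bool) \<Rightarrow> 'a \<Rightarrow> nat" where
  "deg V E v = card {u \<in> V. E v u}"

definition has_K4 :: "'a set \<Rightarrow> ('a \<Rightarrow> 'a \<Rightarrow> bool) \<Rightarrow> bool" where
  "has_K4 V E \<longleftrightarrow> (\<exists>a b c d. distinct [a,b,c,d] \<and> {a,b,c,d} \<subseteq> V \<and>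
     E a b \<and> E a c \<and> E a d \<and> E b c \<and> E b d \<and> E c d)"

definition has_cycle :: "'a set \<Rightarrow> ('a \<Rightarrow> 'a \<Rightarrow> bool) \<Rightarrow> nat \<Rightarrow> bool" where
  "has_cycle V E k \<longleftrightarrow> (\<exists>f. inj_on f {..<k} \<and> f ` {..<k} \<subseteq> V \<and>
     (\<forall>i<k. E (f i) (f (Suc i mod k))))"

definition has_B5 :: "'a set \<Rightarrow> ('a \<Rightarrow> 'a \<Rightarrow> bool) \<Rightarrow> bool" where
  "has_B5 V E \<longleftrightarrow> (\<exists>x y a b c. distinct [x,y,a,b,c] \<and> {x,y,a,b,c} \<subseteq> V \<and> E x y \<and>
     E a x \<and> E a y \<and> E b x \<and> E b y \<and> E c x \<and> E c y)"

definition F_free :: "'a set \<Rightarrow> ('a \<Rightarrow> 'a \<Rightarrow> bool) \<Rightarrow> bool" where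
  "F_free V E \<longleftrightarrow> \<not> has_K4 V E \<and> \<not> has_cycle V E 5 \<and> \<not> has_cycle V E 6
     \<and> \<not> has_cycle V E 7 \<and> \<not> has_B5 V E"

text \<open>Edge relation of H = G[S] extended by a new vertex (None) adjacent exactly to I.\<close>
definition ext_edge :: "('a \<Rightarrow> 'a \<Rightarrow> bool) \<Rightarrow> 'a set \<Rightarrow> 'a set \<Rightarrow> 'a option \<Rightarrow> 'a option \<Rightarrow> bool" where
  "ext_edge E S I x y = (case (x, y) of
      (Some a, Some b) \<Rightarrow> a \<in> S \<and> b \<in> S \<and> E a b
    | (None, Some b) \<Rightarrow> b \<in> I
    | (Some a, None) \<Rightarrow> a \<in> I
    | (None, None) \<Rightarrow> False)"

definition F_free_set :: "('a \<Rightarrow> 'a \<Rightarrow> bool) \<Rightarrow> 'a set \<Rightarrow> 'a set \<Rightarrow> bool" where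
  "F_free_set E S I \<longleftrightarrow> I \<subseteq> S \<and> F_free (insert None (Some ` S)) (ext_edge E S I)"

definition deg_in :: "('a \<Rightarrow> 'a \<Rightarrow> bool) \<Rightarrow> 'a set \<Rightarrow> 'a \<Rightarrow> nat" where
  "deg_in E R v = card {u \<in> R. E v u}"

text \<open>L is an f-assignment on R (lists are finite sets of colours).\<close>
definition is_assignment :: "'a set \<Rightarrow> ('a \<Rightarrow> int) \<Rightarrow> ('a \<Rightarrow> nat set) \<Rightarrow> bool" where
  "is_assignment R f L \<longleftrightarrow> (\<forall>v\<in>R. finite (L v) \<and> f v \<le> int (card (L v)))"

definition L_colorable :: "('a \<Rightarrow> 'a \<Rightarrow> bool) \<Rightarrow> 'a set \<Rightarrow> ('a \<Rightarrow> nat set) \<Rightarrow> bool" where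
  "L_colorable E R L \<longleftrightarrow> (\<exists>c. (\<forall>v\<in>R. c v \<in> L v) \<and> (\<forall>u\<in>R. \<forall>v\<in>R. E u v \<longrightarrow> c u \<noteq> c v))"

definition bfun :: "'a set \<Rightarrow> ('a \<Rightarrow> 'a \<Rightarrow> bool) \<Rightarrow> 'a set \<Rightarrow> nat \<Rightarrow> 'a \<Rightarrow> int" where
  "bfun V E R k v = int k - int (deg V E v) + int (deg_in E R v)"

definition boundary_reducible :: "'a set \<Rightarrow> ('a \<Rightarrow> 'a \<Rightarrow> bool) \<Rightarrow> 'a set \<Rightarrow> 'a set \<Rightarrow> nat \<Rightarrow> bool" where
  "boundary_reducible V E S R k \<longleftrightarrow> R \<noteq> {} \<and> R \<subseteq> S \<and>
    (\<forall>v\<in>R. \<forall>L. is_assignment R ((bfun V E R k)(v := 1)) L \<longrightarrow> L_colorable E R L) \<and>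
    (\<forall>I. I \<subseteq> R \<and> F_free_set E S I \<and> card I + 2 \<le> k \<longrightarrow>
       (\<forall>L. is_assignment R (\<lambda>u. bfun V E R k u - (if u \<in> I then 1 else 0)) L
            \<longrightarrow> L_colorable E R L))"

text \<open>Diamond with middle vertices m1 m2 and side vertices s1 s2.\<close>
definition dia :: "('a \<Rightarrow> 'a \<Rightarrow> bool) \<Rightarrow> 'a \<Rightarrow> 'a \<Rightarrow> 'a \<Rightarrow> 'a \<Rightarrow> bool" where
  "dia E m1 m2 s1 s2 \<longleftrightarrow> distinct [m1,m2,s1,s2] \<and> E m1 m2 \<and>
     E m1 s1 \<and> E m2 s1 \<and> E m1 s2 \<and> E m2 s2"

definition config :: "'a set \<Rightarrow> ('a \<Rightarrow> 'a \<Rightarrow> bool) \<Rightarrow> 'a set \<Rightarrow> 'a set \<Rightarrow> bool" where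
  "config V E S B \<longleftrightarrow> (let d = deg V E in
   \<comment> \<open>C1\<close>
   (\<exists>v. v \<in> V \<and> d v \<le> 2 \<and> S = {v} \<and> B = {}) \<or>
   \<comment> \<open>C2\<close>
   (\<exists>u v w. distinct [u,v,w] \<and> d u = 3 \<and> d v = 3 \<and> d w = 3 \<and> E u v \<and> E v w
      \<and> S = {u,v,w} \<and> B = {}) \<or>
   \<comment> \<open>C3\<close>
   (\<exists>a b c. distinct [a,b,c] \<and> E a b \<and> E b c \<and> E a c \<and> d a = 3 \<and> d b = 3 \<and> d c = 3
      \<and> S = {a,b,c} \<and> B = {}) \<or>
   \<comment> \<open>C4\<close>
   (\<exists>m1 m2 s1 s2 u. dia E m1 m2 s1 s2 \<and> d m1 = 4 \<and> d m2 = 3 \<and> d s1 = 4 \<and> d s2 \<ge> 5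
      \<and> u \<notin> {m1,m2,s1,s2} \<and> d u = 3 \<and> E u m1 \<and> S = {m1,m2,s1,s2,u} \<and> B = {s2}) \<or>
   \<comment> \<open>C5\<close>
   (\<exists>m1 m2 s1 s2. dia E m1 m2 s1 s2 \<and> d m1 = 3 \<and> d m2 = 3 \<and> d s1 \<ge> 5 \<and> d s2 \<ge> 5
      \<and> S = {m1,m2,s1,s2} \<and> B = {s1,s2}) \<or>
   \<comment> \<open>C6\<close>
   (\<exists>m1 m2 s1 s2. dia E m1 m2 s1 s2 \<and> d m1 = 3 \<and> d m2 \<ge> 5 \<and> d s1 = 3 \<and> d s2 \<ge> 5
      \<and> S = {m1,m2,s1,s2} \<and> B = {m2,s2}) \<or>
   \<comment> \<open>C7\<close>
   (\<exists>m1 m2 s1 s2. dia E m1 m2 s1 s2 \<and> d m1 = 5 \<and> d m2 = 4 \<and> d s1 = 3 \<and> d s2 = 3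
      \<and> S = {m1,m2,s1,s2} \<and> B = {}) \<or>
   \<comment> \<open>C8\<close>
   (\<exists>a1 a2 q t b s v. distinct [a1,a2,q,t,b,s,v] \<and>
      dia E a1 a2 q t \<and> d a1 = 4 \<and> d a2 = 4 \<and> d q = 5 \<and> d t = 3 \<and>
      dia E q b s v \<and> d b = 3 \<and> d s = 4 \<and> d v \<ge> 4 \<and>
      S = {a1,a2,q,t,b,s,v} \<and> B = {v}) \<or>
   \<comment> \<open>C9\<close>
   (\<exists>x1 y1 z1 w1 x2 y2 z2 w2. distinct [x1,y1,z1,w1,x2,y2,z2,w2] \<and>
      dia E x1 y1 z1 w1 \<and> d x1 = 3 \<and> d y1 = 4 \<and> d z1 = 4 \<and> d w1 \<ge> 5 \<and>
      dia E x2 y2 z2 w2 \<and> d x2 = 3 \<and> d y2 = 4 \<and> d z2 = 4 \<and> d w2 \<ge> 5 \<and>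
      E y1 y2 \<and> S = {x1,y1,z1,w1,x2,y2,z2,w2} \<and> B = {w1,w2}) \<or>
   \<comment> \<open>C10\<close>
   (\<exists>a b p q c s v. distinct [a,b,p,q,c,s,v] \<and>
      dia E a b p q \<and> d a = 4 \<and> d b = 3 \<and> d p \<ge> 5 \<and> d q = 5 \<and>
      dia E q c s v \<and> d c = 3 \<and> d s = 4 \<and> d v \<ge> 4 \<and>
      S = {a,b,p,q,c,s,v} \<and> B = {p,v}) \<or>
   \<comment> \<open>C11\<close>
   (\<exists>m1 m2 s1 s2 u. dia E m1 m2 s1 s2 \<and> d m1 = 4 \<and> d m2 = 4 \<and> d s1 = 3 \<and> d s2 = 4
      \<and> u \<notin> {m1,m2,s1,s2} \<and> d u = 3 \<and> E u m1 \<and> S = {m1,m2,s1,s2,u} \<and> B = {}) \<or>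
   \<comment> \<open>C12\<close>
   (\<exists>x1 y1 z1 w1 m1 m2 s1 s2. distinct [x1,y1,z1,w1,m1,m2,s1,s2] \<and>
      dia E x1 y1 z1 w1 \<and> d x1 = 3 \<and> d y1 = 4 \<and> d z1 = 4 \<and> d w1 \<ge> 5 \<and>
      dia E m1 m2 s1 s2 \<and> d m1 = 4 \<and> d m2 = 4 \<and> d s1 = 4 \<and> d s2 = 3 \<and>
      E y1 m1 \<and> S = {x1,y1,z1,w1,m1,m2,s1,s2} \<and> B = {w1}) \<or>
   \<comment> \<open>C13\<close>
   (\<exists>a b c x e f g h i j. distinct [a,b,c,x,e,f,g,h,i,j] \<and>
      dia E a b c x \<and> d a = 3 \<and> d b = 5 \<and> d c = 5 \<and> d x = 5 \<and>
      dia E c e f g \<and> d e = 3 \<and> d f = 4 \<and> d g \<ge> 5 \<and>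
      dia E x h i j \<and> d h = 3 \<and> d i = 4 \<and> d j \<ge> 5 \<and>
      S = {a,b,c,x,e,f,g,h,i,j} \<and> B = {g,j})
  )"

end

theory Submission
  imports Defs
begin

text \<open>Both (FIX) and (FORB) are verified by greedy list colouring. Order \<open>R\<close> and colour it
  from the last vertex to the first: a vertex \<open>x\<close> whose list has at least
  \<open>k - deg x + deg\<^sub>R x - [x \<in> I]\<close> colours can be coloured as soon as at least
  \<open>deg x - k + 1 + [x \<in> I]\<close> of its neighbours in \<open>R\<close> precede it, i.e. are still uncoloured.
  For each configuration we exhibit such orderings: one ending with \<open>v\<close> for every fixed vertex
  \<open>v\<close> (whose single colour is used first), and one for every \<open>I\<close> of size one or two. The pairs
  \<open>I = {a, b}\<close> admitting no such ordering are not \<open>\<F>\<close>-free: a new vertex adjacent to \<open>a\<close> and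
  \<open>b\<close> closes a \<open>C\<^sub>5\<close>, a \<open>C\<^sub>6\<close> or a \<open>B\<^sub>5\<close> through the configuration.\<close>

section \<open>Greedy list colouring\<close>

lemma graph_symD: "graph V E \<Longrightarrow> E u v \<Longrightarrow> E v u"
  and graph_irreflD: "graph V E \<Longrightarrow> \<not> E v v"
  by (auto simp: graph_def)

fun greedy_order :: "('a \<Rightarrow> 'a \<Rightarrow> bool) \<Rightarrow> ('a \<Rightarrow> nat set) \<Rightarrow> 'a list \<Rightarrow> bool" where
  "greedy_order E L [] = True"
| "greedy_order E L (x # xs) \<longleftrightarrow> card {u \<in> set xs. E x u} < card (L x) \<and> greedy_order E L xs"

lemma greedy_order_colorable:
  assumes "greedy_order E L xs" and "distinct xs" and "\<forall>v\<in>set xs. finite (L v)"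
    and "\<And>u v. E u v \<Longrightarrow> E v u" and "\<And>v. \<not> E v v"
  shows "L_colorable E (set xs) L"
  using assms(1-3)
proof (induction xs)
  case Nil
  show ?case by (simp add: L_colorable_def)
next
  case (Cons x xs)
  then obtain c where c_list: "\<forall>v\<in>set xs. c v \<in> L v"
    and c_proper: "\<forall>u\<in>set xs. \<forall>v\<in>set xs. E u v \<longrightarrow> c u \<noteq> c v"
    by (auto simp: L_colorable_def)
  let ?used = "c ` {u \<in> set xs. E x u}"
  have "card ?used < card (L x)"
    using Cons.prems(1) card_image_le[of "{u \<in> set xs. E x u}" c] by simp
  then obtain col where col: "col \<in> L x" "col \<notin> ?used"
    using card_mono[of ?used "L x"] by force
  have x_new: "x \<notin> set xs" using Cons.prems(2) by simp
  define c' where "c' = c(x := col)"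
  have "\<forall>v\<in>set (x # xs). c' v \<in> L v"
    using c_list col x_new by (auto simp: c'_def)
  moreover have "c' u \<noteq> c' v" if "u \<in> set (x # xs)" "v \<in> set (x # xs)" "E u v" for u v
    using that c_proper col x_new assms(4,5) unfolding c'_def
    by (cases "u = x"; cases "v = x") (auto 0 3)
  ultimately show ?case unfolding L_colorable_def by blast
qed

text \<open>A certificate for a greedy order: each listed vertex \<open>x\<close> comes with a list \<open>ws\<close> of at least
  \<open>g x\<close> distinct neighbours listed before it, i.e. coloured after it.\<close>

fun earlier_nbrs_cert ::
  "('a \<Rightarrow> 'a \<Rightarrow> bool) \<Rightarrow> ('a \<Rightarrow> int) \<Rightarrow> 'a list \<Rightarrow> ('a \<times> 'a list) list \<Rightarrow> bool"
  where
  "earlier_nbrs_cert E g pre [] = True"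
| "earlier_nbrs_cert E g pre ((x, ws) # cs) \<longleftrightarrow>
     set ws \<subseteq> set pre \<and> distinct ws \<and> (\<forall>w\<in>set ws. E x w) \<and> g x \<le> int (length ws) \<and>
     earlier_nbrs_cert E g (x # pre) cs"

lemma earlier_nbrs_cert_greedy_order:
  assumes "earlier_nbrs_cert E g pre cs" and "distinct (pre @ map fst cs @ zs)"
    and "set pre \<union> set (map fst cs) \<union> set zs = R" and "\<And>v. \<not> E v v"
    and "\<forall>x\<in>set (map fst cs). int (deg_in E R x) < g x + int (card (L x))"
    and "greedy_order E L zs"
  shows "greedy_order E L (map fst cs @ zs)"
  using assms(1-3,5)
proof (induction cs arbitrary: pre)
  case Nil
  show ?case using assms(6) by simp
next
  case (Cons c cs)
  obtain x ws where c: "c = (x, ws)" by fastforce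
  have ws: "set ws \<subseteq> {u \<in> set pre. E x u}" "distinct ws" "g x \<le> int (length ws)"
    and cert: "earlier_nbrs_cert E g (x # pre) cs"
    using Cons.prems(1) by (auto simp: c)
  let ?later = "{u \<in> set (map fst cs @ zs). E x u}"
  have "{u \<in> R. E x u} = {u \<in> set pre. E x u} \<union> ?later"
    using Cons.prems(3) assms(4) by (auto simp: c)
  moreover have "{u \<in> set pre. E x u} \<inter> ?later = {}"
    using Cons.prems(2) by (auto simp: c)
  ultimately have "deg_in E R x = card {u \<in> set pre. E x u} + card ?later"
    unfolding deg_in_def by (simp add: card_Un_disjoint)
  moreover have "length ws \<le> card {u \<in> set pre. E x u}"
    using card_mono[OF _ ws(1)] distinct_card[OF ws(2)] by simp
  moreover have "int (deg_in E R x) < g x + int (card (L x))"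
    using Cons.prems(4) by (simp add: c)
  ultimately have "card ?later < card (L x)" using ws(3) by linarith
  moreover have "greedy_order E L (map fst cs @ zs)"
    using Cons.IH[OF cert] Cons.prems(2-4) by (auto simp: c)
  ultimately show ?case by (simp add: c)
qed

definition forb_colorable :: "'a set \<Rightarrow> ('a \<Rightarrow> 'a \<Rightarrow> bool) \<Rightarrow> 'a set \<Rightarrow> nat \<Rightarrow> 'a set \<Rightarrow> bool"
  where "forb_colorable V E R k I \<longleftrightarrow>
    (\<forall>L. is_assignment R (\<lambda>u. bfun V E R k u - (if u \<in> I then 1 else 0)) L \<longrightarrow> L_colorable E R L)"

definition fix_colorable :: "'a set \<Rightarrow> ('a \<Rightarrow> 'a \<Rightarrow> bool) \<Rightarrow> 'a set \<Rightarrow> nat \<Rightarrow> 'a \<Rightarrow> bool"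
  where "fix_colorable V E R k v \<longleftrightarrow>
    (\<forall>L. is_assignment R ((bfun V E R k)(v := 1)) L \<longrightarrow> L_colorable E R L)"

lemma forb_colorable_by_cert:
  assumes G: "graph V E"
    and "earlier_nbrs_cert E (\<lambda>u. int (deg V E u) + 1 - int k + (if u \<in> I then 1 else 0)) [] cs"
    and "distinct (map fst cs)" and R: "set (map fst cs) = R"
  shows "forb_colorable V E R k I"
  unfolding forb_colorable_def
proof (intro allI impI)
  fix L assume L: "is_assignment R (\<lambda>u. bfun V E R k u - (if u \<in> I then 1 else 0)) L"
  then have "\<forall>x\<in>R. int (deg_in E R x)
      < int (deg V E x) + 1 - int k + (if x \<in> I then 1 else 0) + int (card (L x))"
    unfolding is_assignment_def bfun_def by force
  then have "greedy_order E L (map fst cs @ [])"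
    using assms(2-4) graph_irreflD[OF G]
    by (intro earlier_nbrs_cert_greedy_order[where R = R]) auto
  then have "L_colorable E (set (map fst cs)) L"
    by (intro greedy_order_colorable)
      (use L assms graph_symD[OF G] graph_irreflD[OF G] in \<open>auto simp: is_assignment_def\<close>)
  then show "L_colorable E R L" using R by simp
qed

lemma fix_colorable_by_cert:
  assumes G: "graph V E" and "earlier_nbrs_cert E (\<lambda>u. int (deg V E u) + 1 - int k) [] cs"
    and "distinct (map fst cs @ [v])" and R: "set (map fst cs @ [v]) = R"
  shows "fix_colorable V E R k v"
  unfolding fix_colorable_def
proof (intro allI impI)
  fix L assume L: "is_assignment R ((bfun V E R k)(v := 1)) L"
  have "int (deg_in E R x) < int (deg V E x) + 1 - int k + int (card (L x))" if "x \<in> R - {v}" for x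
  proof -
    have "bfun V E R k x \<le> int (card (L x))"
      using L that by (auto simp: is_assignment_def)
    then show ?thesis by (simp add: bfun_def)
  qed
  moreover have "greedy_order E L [v]"
    using L R by (auto simp: is_assignment_def)
  ultimately have "greedy_order E L (map fst cs @ [v])"
    using assms(2-4) graph_irreflD[OF G]
    by (intro earlier_nbrs_cert_greedy_order[where R = R]) auto
  then have "L_colorable E (set (map fst cs @ [v])) L"
    by (intro greedy_order_colorable)
      (use L assms graph_symD[OF G] graph_irreflD[OF G] in \<open>auto simp: is_assignment_def\<close>)
  then show "L_colorable E R L" using R by simp
qed

lemma forb_colorable_subset:
  assumes "I \<subseteq> J" and "forb_colorable V E R k J"
  shows "forb_colorable V E R k I"
  unfolding forb_colorable_def
proof (intro allI impI)
  fix L assume "is_assignment R (\<lambda>u. bfun V E R k u - (if u \<in> I then 1 else 0)) L"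
  then have "is_assignment R (\<lambda>u. bfun V E R k u - (if u \<in> J then 1 else 0)) L"
    using assms(1) unfolding is_assignment_def by (smt (verit) subsetD)
  then show "L_colorable E R L" using assms(2) unfolding forb_colorable_def by blast
qed

lemma sorted_wrt_pair_cases:
  "sorted_wrt P xs \<Longrightarrow> a \<in> set xs \<Longrightarrow> b \<in> set xs \<Longrightarrow> a \<noteq> b \<Longrightarrow> P a b \<or> P b a"
  by (induction xs) auto

lemma boundary_reducible_4I:
  assumes R: "set rs = R" and "rs \<noteq> []" and "R \<subseteq> S"
    and fixing: "\<forall>v\<in>R. fix_colorable V E R 4 v"
    and forb_single: "\<forall>a\<in>R. forb_colorable V E R 4 {a}"
    and forb_pair: "sorted_wrt (\<lambda>a b. F_free_set E S {a, b} \<longrightarrow> forb_colorable V E R 4 {a, b}) rs"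
  shows "boundary_reducible V E S R 4"
  unfolding boundary_reducible_def
proof (intro conjI allI impI ballI)
  show "R \<noteq> {}" "R \<subseteq> S" using assms(1-3) by auto
next
  fix v L assume "v \<in> R" "is_assignment R ((bfun V E R 4)(v := 1)) L"
  then show "L_colorable E R L" using fixing unfolding fix_colorable_def by blast
next
  fix I L
  assume I: "I \<subseteq> R \<and> F_free_set E S I \<and> card I + 2 \<le> 4"
    and L: "is_assignment R (\<lambda>u. bfun V E R 4 u - (if u \<in> I then 1 else 0)) L"
  have "finite I" using I R finite_subset by blast
  have "card I \<le> 2" using I by simp
  then consider "card I = 0" | "card I = 1" | "card I = 2" by linarith
  then have "forb_colorable V E R 4 I"
  proof cases
    case 1
    then have "I = {}" using \<open>finite I\<close> by simp
    moreover obtain a where "a \<in> R" using assms(1,2) by (cases rs) auto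
    ultimately show ?thesis using forb_single forb_colorable_subset by blast
  next
    case 2
    then show ?thesis using I forb_single by (auto simp: card_1_singleton_iff)
  next
    case 3
    then obtain a b where "I = {a, b}" "a \<noteq> b" by (auto simp: card_2_iff)
    then show ?thesis
      using I R sorted_wrt_pair_cases[OF forb_pair]
      by (metis insert_commute subset_iff insertI1 insertI2)
  qed
  with L show "L_colorable E R L" unfolding forb_colorable_def by blast
qed

section \<open>Forbidden subgraphs through the new vertex\<close>

lemma successively_nth:
  "successively P xs \<Longrightarrow> Suc i < length xs \<Longrightarrow> P (xs ! i) (xs ! Suc i)"
  by (induction P xs arbitrary: i rule: successively.induct) (auto simp: less_Suc_eq_0_disj)

lemma has_cycleI:
  assumes "distinct cs" and "set cs \<subseteq> V" and "length cs = k"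
    and "successively E (cs @ [hd cs])"
  shows "has_cycle V E k"
  unfolding has_cycle_def
proof (intro exI[of _ "nth cs"] conjI allI impI)
  show "inj_on (nth cs) {..<k}" using assms(1,3) by (auto intro: inj_on_nth)
  show "nth cs ` {..<k} \<subseteq> V" using assms(2,3) by auto
next
  fix i assume "i < k"
  then have "E ((cs @ [hd cs]) ! i) ((cs @ [hd cs]) ! Suc i)"
    using successively_nth[OF assms(4)] assms(3) by simp
  moreover have "cs \<noteq> []" using \<open>i < k\<close> assms(3) by auto
  ultimately show "E (cs ! i) (cs ! (Suc i mod k))"
    using \<open>i < k\<close> assms(3) by (cases "Suc i = k") (auto simp: nth_append hd_conv_nth)
qed

lemma not_F_free_set_cycleI:
  assumes "distinct cs" and "set cs \<subseteq> insert None (Some ` S)" and "length cs \<in> {5, 6, 7}"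
    and "successively (ext_edge E S I) (cs @ [hd cs])"
  shows "\<not> F_free_set E S I"
  using has_cycleI[OF assms(1,2) refl assms(4)] assms(3)
  unfolding F_free_set_def F_free_def by auto

lemma not_F_free_set_B5I:
  assumes "distinct [x, y, a, b, c]" and "{x, y, a, b, c} \<subseteq> insert None (Some ` S)"
    and "ext_edge E S I x y"
    and "ext_edge E S I a x" "ext_edge E S I a y" "ext_edge E S I b x" "ext_edge E S I b y"
    and "ext_edge E S I c x" "ext_edge E S I c y"
  shows "\<not> F_free_set E S I"
  using assms unfolding F_free_set_def F_free_def has_B5_def by blast

section \<open>The configurations\<close>

lemma dia_adj:
  assumes "graph V E" and "dia E m1 m2 s1 s2"
  shows "E m1 m2" "E m2 m1" "E m1 s1" "E s1 m1" "E m2 s1" "E s1 m2"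
    "E m1 s2" "E s2 m1" "E m2 s2" "E s2 m2"
  using assms by (auto simp: dia_def dest: graph_symD)

text \<open>Simplified, this states every disequality between entries of \<open>xs\<close> in both orientations,
  as the simplifier needs them.\<close>

lemma distinct_both_ways: "distinct xs \<Longrightarrow> distinct xs \<and> distinct (rev xs)"
  by simp

lemma C1_reducible:
  assumes G: "graph V E" and deg: "deg V E v \<le> 2"
  shows "boundary_reducible V E {v} {v} 4"
proof -
  have "fix_colorable V E {v} 4 v"
    by (rule fix_colorable_by_cert[OF G, where cs = "[]"]) auto
  moreover have "forb_colorable V E {v} 4 {v}"
    by (rule forb_colorable_by_cert[OF G, where cs = "[(v, [])]"]) (use deg in auto)
  ultimately show ?thesis
    by (intro boundary_reducible_4I[where rs = "[v]"]) auto
qed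

lemma C2_reducible:
  assumes G: "graph V E"
    and nq: "distinct [u, v, w]"
    and adj: "E u v" "E v w"
    and deg: "deg V E u = 3" "deg V E v = 3" "deg V E w = 3"
  shows "boundary_reducible V E {u, v, w} {u, v, w} 4"
    (is "boundary_reducible V E ?S ?R 4")
proof -
  note [simp] = distinct_both_ways[OF nq, simplified] adj adj[THEN graph_symD[OF G]]
    deg ext_edge_def
  have "fix_colorable V E ?R 4 u"
    by (rule fix_colorable_by_cert[OF G, where cs = "[(v, []), (w, [v])]"]) auto
  moreover have "fix_colorable V E ?R 4 v"
    by (rule fix_colorable_by_cert[OF G, where cs = "[(u, []), (w, [])]"]) auto
  moreover have "fix_colorable V E ?R 4 w"
    by (rule fix_colorable_by_cert[OF G, where cs = "[(u, []), (v, [u])]"]) auto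
  moreover have "forb_colorable V E ?R 4 {u, v}"
    by (rule forb_colorable_by_cert[OF G, where cs = "[(w, []), (v, [w]), (u, [v])]"]) auto
  moreover have "forb_colorable V E ?R 4 {u, w}"
    by (rule forb_colorable_by_cert[OF G, where cs = "[(v, []), (u, [v]), (w, [v])]"]) auto
  moreover have "forb_colorable V E ?R 4 {v, w}"
    by (rule forb_colorable_by_cert[OF G, where cs = "[(u, []), (v, [u]), (w, [v])]"]) auto
  moreover have "forb_colorable V E ?R 4 {u}"
    by (rule forb_colorable_subset[OF _ \<open>forb_colorable V E ?R 4 {u, v}\<close>]) simp
  moreover have "forb_colorable V E ?R 4 {v}"
    by (rule forb_colorable_subset[OF _ \<open>forb_colorable V E ?R 4 {u, v}\<close>]) simp
  moreover have "forb_colorable V E ?R 4 {w}"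
    by (rule forb_colorable_subset[OF _ \<open>forb_colorable V E ?R 4 {u, w}\<close>]) simp
  ultimately show ?thesis
    by (intro boundary_reducible_4I[where rs = "[u, v, w]"]) auto
qed

lemma C3_reducible:
  assumes G: "graph V E"
    and nq: "distinct [a, b, c]"
    and adj: "E a b" "E b c" "E a c"
    and deg: "deg V E a = 3" "deg V E b = 3" "deg V E c = 3"
  shows "boundary_reducible V E {a, b, c} {a, b, c} 4"
    (is "boundary_reducible V E ?S ?R 4")
proof -
  note [simp] = distinct_both_ways[OF nq, simplified] adj adj[THEN graph_symD[OF G]]
    deg ext_edge_def
  have "fix_colorable V E ?R 4 a"
    by (rule fix_colorable_by_cert[OF G, where cs = "[(b, []), (c, [b])]"]) auto
  moreover have "fix_colorable V E ?R 4 b"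
    by (rule fix_colorable_by_cert[OF G, where cs = "[(a, []), (c, [a])]"]) auto
  moreover have "fix_colorable V E ?R 4 c"
    by (rule fix_colorable_by_cert[OF G, where cs = "[(a, []), (b, [a])]"]) auto
  moreover have "forb_colorable V E ?R 4 {a, b}"
    by (rule forb_colorable_by_cert[OF G, where cs = "[(c, []), (a, [c]), (b, [c, a])]"]) auto
  moreover have "forb_colorable V E ?R 4 {a, c}"
    by (rule forb_colorable_by_cert[OF G, where cs = "[(b, []), (a, [b]), (c, [b, a])]"]) auto
  moreover have "forb_colorable V E ?R 4 {b, c}"
    by (rule forb_colorable_by_cert[OF G, where cs = "[(a, []), (b, [a]), (c, [a, b])]"]) auto
  moreover have "forb_colorable V E ?R 4 {a}"
    by (rule forb_colorable_subset[OF _ \<open>forb_colorable V E ?R 4 {a, b}\<close>]) simp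
  moreover have "forb_colorable V E ?R 4 {b}"
    by (rule forb_colorable_subset[OF _ \<open>forb_colorable V E ?R 4 {a, b}\<close>]) simp
  moreover have "forb_colorable V E ?R 4 {c}"
    by (rule forb_colorable_subset[OF _ \<open>forb_colorable V E ?R 4 {a, c}\<close>]) simp
  ultimately show ?thesis
    by (intro boundary_reducible_4I[where rs = "[a, b, c]"]) auto
qed

lemma C4_reducible:
  assumes G: "graph V E"
    and D: "dia E m1 m2 s1 s2"
    and u: "u \<notin> {m1, m2, s1, s2}"
    and adj: "E u m1"
    and deg: "deg V E m1 = 4" "deg V E m2 = 3" "deg V E s1 = 4" "deg V E u = 3"
  shows "boundary_reducible V E {m1, m2, s1, s2, u} ({m1, m2, s1, s2, u} - {s2}) 4"
    (is "boundary_reducible V E ?S ?R 4")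
proof -
  have nq: "distinct [m1, m2, s1, s2, u]" using D u by (auto simp: dia_def)
  note [simp] = distinct_both_ways[OF nq, simplified] dia_adj[OF G D] adj
    adj[THEN graph_symD[OF G]] deg ext_edge_def
  have "fix_colorable V E ?R 4 m1"
    by (rule fix_colorable_by_cert[OF G, where cs = "[(m2, []), (s1, [m2]), (u, [])]"]) auto
  moreover have "fix_colorable V E ?R 4 m2"
    by (rule fix_colorable_by_cert[OF G, where cs = "[(u, []), (m1, [u]), (s1, [m1])]"]) auto
  moreover have "fix_colorable V E ?R 4 s1"
    by (rule fix_colorable_by_cert[OF G, where cs = "[(m2, []), (m1, [m2]), (u, [m1])]"]) auto
  moreover have "fix_colorable V E ?R 4 u"
    by (rule fix_colorable_by_cert[OF G, where cs = "[(m2, []), (m1, [m2]),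
      (s1, [m2, m1])]"]) auto
  moreover have "\<not> F_free_set E ?S {m1, m2}"
    by (rule not_F_free_set_B5I[of "Some m1" "Some m2" "Some s1" "Some s2" None]) auto
  moreover have "\<not> F_free_set E ?S {m1, s1}"
    by (rule not_F_free_set_cycleI[of "[Some m1, Some s2, Some m2, Some s1, None]"]) auto
  moreover have "forb_colorable V E ?R 4 {m1, u}"
    by (rule forb_colorable_by_cert[OF G, where cs = "[(m2, []), (s1, [m2]), (m1, [m2, s1]),
      (u, [m1])]"]) auto
  moreover have "\<not> F_free_set E ?S {m2, s1}"
    by (rule not_F_free_set_cycleI[of "[Some m1, Some s1, None, Some m2, Some s2]"]) auto
  moreover have "\<not> F_free_set E ?S {m2, u}"
    by (rule not_F_free_set_cycleI[of "[Some m1, Some s1, Some m2, None, Some u]"]) auto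
  moreover have "\<not> F_free_set E ?S {s1, u}"
    by (rule not_F_free_set_cycleI[of "[Some m1, Some m2, Some s1, None, Some u]"]) auto
  moreover have "forb_colorable V E ?R 4 {m1}"
    by (rule forb_colorable_subset[OF _ \<open>forb_colorable V E ?R 4 {m1, u}\<close>]) simp
  moreover have "forb_colorable V E ?R 4 {m2}"
    by (rule forb_colorable_by_cert[OF G, where cs = "[(u, []), (m1, [u]), (m2, [m1]),
      (s1, [m1, m2])]"]) auto
  moreover have "forb_colorable V E ?R 4 {s1}"
    by (rule forb_colorable_by_cert[OF G, where cs = "[(m2, []), (m1, [m2]), (s1, [m2, m1]),
      (u, [m1])]"]) auto
  moreover have "forb_colorable V E ?R 4 {u}"
    by (rule forb_colorable_subset[OF _ \<open>forb_colorable V E ?R 4 {m1, u}\<close>]) simp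
  ultimately show ?thesis
    by (intro boundary_reducible_4I[where rs = "[m1, m2, s1, u]"]) auto
qed

lemma C5_reducible:
  assumes G: "graph V E"
    and D: "dia E m1 m2 s1 s2"
    and deg: "deg V E m1 = 3" "deg V E m2 = 3"
  shows "boundary_reducible V E {m1, m2, s1, s2} ({m1, m2, s1, s2} - {s1, s2}) 4"
    (is "boundary_reducible V E ?S ?R 4")
proof -
  have nq: "distinct [m1, m2, s1, s2]" using D by (auto simp: dia_def)
  note [simp] = distinct_both_ways[OF nq, simplified] dia_adj[OF G D] deg ext_edge_def
  have "fix_colorable V E ?R 4 m1"
    by (rule fix_colorable_by_cert[OF G, where cs = "[(m2, [])]"]) auto
  moreover have "fix_colorable V E ?R 4 m2"
    by (rule fix_colorable_by_cert[OF G, where cs = "[(m1, [])]"]) auto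
  moreover have "\<not> F_free_set E ?S {m1, m2}"
    by (rule not_F_free_set_B5I[of "Some m1" "Some m2" "Some s1" "Some s2" None]) auto
  moreover have "forb_colorable V E ?R 4 {m1}"
    by (rule forb_colorable_by_cert[OF G, where cs = "[(m2, []), (m1, [m2])]"]) auto
  moreover have "forb_colorable V E ?R 4 {m2}"
    by (rule forb_colorable_by_cert[OF G, where cs = "[(m1, []), (m2, [m1])]"]) auto
  ultimately show ?thesis
    by (intro boundary_reducible_4I[where rs = "[m1, m2]"]) auto
qed

lemma C6_reducible:
  assumes G: "graph V E"
    and D: "dia E m1 m2 s1 s2"
    and deg: "deg V E m1 = 3" "deg V E s1 = 3"
  shows "boundary_reducible V E {m1, m2, s1, s2} ({m1, m2, s1, s2} - {m2, s2}) 4"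
    (is "boundary_reducible V E ?S ?R 4")
proof -
  have nq: "distinct [m1, m2, s1, s2]" using D by (auto simp: dia_def)
  note [simp] = distinct_both_ways[OF nq, simplified] dia_adj[OF G D] deg ext_edge_def
  have "fix_colorable V E ?R 4 m1"
    by (rule fix_colorable_by_cert[OF G, where cs = "[(s1, [])]"]) auto
  moreover have "fix_colorable V E ?R 4 s1"
    by (rule fix_colorable_by_cert[OF G, where cs = "[(m1, [])]"]) auto
  moreover have "\<not> F_free_set E ?S {m1, s1}"
    by (rule not_F_free_set_cycleI[of "[Some m1, Some s2, Some m2, Some s1, None]"]) auto
  moreover have "forb_colorable V E ?R 4 {m1}"
    by (rule forb_colorable_by_cert[OF G, where cs = "[(s1, []), (m1, [s1])]"]) auto
  moreover have "forb_colorable V E ?R 4 {s1}"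
    by (rule forb_colorable_by_cert[OF G, where cs = "[(m1, []), (s1, [m1])]"]) auto
  ultimately show ?thesis
    by (intro boundary_reducible_4I[where rs = "[m1, s1]"]) auto
qed

lemma C7_reducible:
  assumes G: "graph V E"
    and D: "dia E m1 m2 s1 s2"
    and deg: "deg V E m1 = 5" "deg V E m2 = 4" "deg V E s1 = 3" "deg V E s2 = 3"
  shows "boundary_reducible V E {m1, m2, s1, s2} {m1, m2, s1, s2} 4"
    (is "boundary_reducible V E ?S ?R 4")
proof -
  have nq: "distinct [m1, m2, s1, s2]" using D by (auto simp: dia_def)
  note [simp] = distinct_both_ways[OF nq, simplified] dia_adj[OF G D] deg ext_edge_def
  have "fix_colorable V E ?R 4 m1"
    by (rule fix_colorable_by_cert[OF G, where cs = "[(s1, []), (m2, [s1]), (s2, [m2])]"]) auto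
  moreover have "fix_colorable V E ?R 4 m2"
    by (rule fix_colorable_by_cert[OF G, where cs = "[(s1, []), (s2, []),
      (m1, [s1, s2])]"]) auto
  moreover have "fix_colorable V E ?R 4 s1"
    by (rule fix_colorable_by_cert[OF G, where cs = "[(s2, []), (m2, [s2]),
      (m1, [s2, m2])]"]) auto
  moreover have "fix_colorable V E ?R 4 s2"
    by (rule fix_colorable_by_cert[OF G, where cs = "[(s1, []), (m2, [s1]),
      (m1, [s1, m2])]"]) auto
  moreover have "\<not> F_free_set E ?S {m1, m2}"
    by (rule not_F_free_set_B5I[of "Some m1" "Some m2" "Some s1" "Some s2" None]) auto
  moreover have "\<not> F_free_set E ?S {m1, s1}"
    by (rule not_F_free_set_cycleI[of "[Some m1, Some s2, Some m2, Some s1, None]"]) auto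
  moreover have "\<not> F_free_set E ?S {m1, s2}"
    by (rule not_F_free_set_cycleI[of "[Some m1, Some s1, Some m2, Some s2, None]"]) auto
  moreover have "\<not> F_free_set E ?S {m2, s1}"
    by (rule not_F_free_set_cycleI[of "[Some m1, Some s1, None, Some m2, Some s2]"]) auto
  moreover have "\<not> F_free_set E ?S {m2, s2}"
    by (rule not_F_free_set_cycleI[of "[Some m1, Some s1, Some m2, None, Some s2]"]) auto
  moreover have "\<not> F_free_set E ?S {s1, s2}"
    by (rule not_F_free_set_cycleI[of "[Some m1, Some m2, Some s1, None, Some s2]"]) auto
  moreover have "forb_colorable V E ?R 4 {m1}"
    by (rule forb_colorable_by_cert[OF G, where cs = "[(s1, []), (m2, [s1]), (s2, [m2]),
      (m1, [s1, m2, s2])]"]) auto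
  moreover have "forb_colorable V E ?R 4 {m2}"
    by (rule forb_colorable_by_cert[OF G, where cs = "[(s1, []), (s2, []), (m1, [s1, s2]),
      (m2, [s1, s2, m1])]"]) auto
  moreover have "forb_colorable V E ?R 4 {s1}"
    by (rule forb_colorable_by_cert[OF G, where cs = "[(s2, []), (m2, [s2]), (m1, [s2, m2]),
      (s1, [m2, m1])]"]) auto
  moreover have "forb_colorable V E ?R 4 {s2}"
    by (rule forb_colorable_by_cert[OF G, where cs = "[(s1, []), (m2, [s1]), (m1, [s1, m2]),
      (s2, [m2, m1])]"]) auto
  ultimately show ?thesis
    by (intro boundary_reducible_4I[where rs = "[m1, m2, s1, s2]"]) auto
qed

lemma C8_reducible:
  assumes G: "graph V E"
    and nq: "distinct [a1, a2, q, t, b, s, v]"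
    and D1: "dia E a1 a2 q t"
    and D2: "dia E q b s v"
    and deg: "deg V E a1 = 4" "deg V E a2 = 4" "deg V E q = 5" "deg V E t = 3" "deg V E b = 3"
      "deg V E s = 4"
  shows "boundary_reducible V E {a1, a2, q, t, b, s, v} ({a1, a2, q, t, b, s, v} - {v}) 4"
    (is "boundary_reducible V E ?S ?R 4")
proof -
  note [simp] = distinct_both_ways[OF nq, simplified] dia_adj[OF G D1] dia_adj[OF G D2]
    deg ext_edge_def
  have "fix_colorable V E ?R 4 a1"
    by (rule fix_colorable_by_cert[OF G, where cs = "[(b, []), (s, [b]), (q, [b, s]), (a2, [q]),
      (t, [a2])]"]) auto
  moreover have "fix_colorable V E ?R 4 a2"
    by (rule fix_colorable_by_cert[OF G, where cs = "[(b, []), (s, [b]), (q, [b, s]), (a1, [q]),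
      (t, [a1])]"]) auto
  moreover have "fix_colorable V E ?R 4 q"
    by (rule fix_colorable_by_cert[OF G, where cs = "[(b, []), (s, [b]), (t, []), (a1, [t]),
      (a2, [t, a1])]"]) auto
  moreover have "fix_colorable V E ?R 4 t"
    by (rule fix_colorable_by_cert[OF G, where cs = "[(b, []), (s, [b]), (q, [b, s]), (a1, [q]),
      (a2, [q, a1])]"]) auto
  moreover have "fix_colorable V E ?R 4 b"
    by (rule fix_colorable_by_cert[OF G, where cs = "[(t, []), (a1, [t]), (a2, [t, a1]),
      (q, [a1, a2]), (s, [q])]"]) auto
  moreover have "fix_colorable V E ?R 4 s"
    by (rule fix_colorable_by_cert[OF G, where cs = "[(b, []), (t, []), (a1, [t]),
      (a2, [t, a1]), (q, [b, a1, a2])]"]) auto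
  moreover have "\<not> F_free_set E ?S {a1, a2}"
    by (rule not_F_free_set_B5I[of "Some a1" "Some a2" "Some q" "Some t" None]) auto
  moreover have "\<not> F_free_set E ?S {a1, q}"
    by (rule not_F_free_set_cycleI[of "[Some a1, Some t, Some a2, Some q, None]"]) auto
  moreover have "\<not> F_free_set E ?S {a1, t}"
    by (rule not_F_free_set_cycleI[of "[Some a1, Some q, Some a2, Some t, None]"]) auto
  moreover have "\<not> F_free_set E ?S {a1, b}"
    by (rule not_F_free_set_cycleI[of "[Some a1, Some a2, Some q, Some b, None]"]) auto
  moreover have "\<not> F_free_set E ?S {a1, s}"
    by (rule not_F_free_set_cycleI[of "[Some a1, Some a2, Some q, Some s, None]"]) auto
  moreover have "\<not> F_free_set E ?S {a2, q}"
    by (rule not_F_free_set_cycleI[of "[Some a1, Some q, None, Some a2, Some t]"]) auto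
  moreover have "\<not> F_free_set E ?S {a2, t}"
    by (rule not_F_free_set_cycleI[of "[Some a1, Some q, Some a2, None, Some t]"]) auto
  moreover have "\<not> F_free_set E ?S {a2, b}"
    by (rule not_F_free_set_cycleI[of "[Some a1, Some a2, None, Some b, Some q]"]) auto
  moreover have "\<not> F_free_set E ?S {a2, s}"
    by (rule not_F_free_set_cycleI[of "[Some a1, Some a2, None, Some s, Some q]"]) auto
  moreover have "\<not> F_free_set E ?S {q, t}"
    by (rule not_F_free_set_cycleI[of "[Some a1, Some a2, Some q, None, Some t]"]) auto
  moreover have "\<not> F_free_set E ?S {q, b}"
    by (rule not_F_free_set_B5I[of "Some q" "Some b" "Some s" "Some v" None]) auto
  moreover have "\<not> F_free_set E ?S {q, s}"
    by (rule not_F_free_set_cycleI[of "[Some b, Some s, None, Some q, Some v]"]) auto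
  moreover have "\<not> F_free_set E ?S {t, b}"
    by (rule not_F_free_set_cycleI[of "[Some a1, Some q, Some b, None, Some t]"]) auto
  moreover have "\<not> F_free_set E ?S {t, s}"
    by (rule not_F_free_set_cycleI[of "[Some a1, Some q, Some s, None, Some t]"]) auto
  moreover have "\<not> F_free_set E ?S {b, s}"
    by (rule not_F_free_set_cycleI[of "[Some b, Some v, Some q, Some s, None]"]) auto
  moreover have "forb_colorable V E ?R 4 {a1}"
    by (rule forb_colorable_by_cert[OF G, where cs = "[(b, []), (s, [b]), (q, [b, s]),
      (a2, [q]), (a1, [q, a2]), (t, [a2, a1])]"]) auto
  moreover have "forb_colorable V E ?R 4 {a2}"
    by (rule forb_colorable_by_cert[OF G, where cs = "[(b, []), (s, [b]), (q, [b, s]),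
      (a1, [q]), (a2, [q, a1]), (t, [a1, a2])]"]) auto
  moreover have "forb_colorable V E ?R 4 {q}"
    by (rule forb_colorable_by_cert[OF G, where cs = "[(b, []), (s, [b]), (t, []), (a1, [t]),
      (a2, [t, a1]), (q, [b, s, a1, a2])]"]) auto
  moreover have "forb_colorable V E ?R 4 {t}"
    by (rule forb_colorable_by_cert[OF G, where cs = "[(b, []), (s, [b]), (q, [b, s]),
      (a1, [q]), (a2, [q, a1]), (t, [a1, a2])]"]) auto
  moreover have "forb_colorable V E ?R 4 {b}"
    by (rule forb_colorable_by_cert[OF G, where cs = "[(t, []), (a1, [t]), (a2, [t, a1]),
      (q, [a1, a2]), (b, [q]), (s, [q, b])]"]) auto
  moreover have "forb_colorable V E ?R 4 {s}"
    by (rule forb_colorable_by_cert[OF G, where cs = "[(b, []), (t, []), (a1, [t]),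
      (a2, [t, a1]), (q, [b, a1, a2]), (s, [b, q])]"]) auto
  ultimately show ?thesis
    by (intro boundary_reducible_4I[where rs = "[a1, a2, q, t, b, s]"]) auto
qed

lemma C9_reducible:
  assumes G: "graph V E"
    and nq: "distinct [x1, y1, z1, w1, x2, y2, z2, w2]"
    and D1: "dia E x1 y1 z1 w1"
    and D2: "dia E x2 y2 z2 w2"
    and adj: "E y1 y2"
    and deg: "deg V E x1 = 3" "deg V E y1 = 4" "deg V E z1 = 4" "deg V E x2 = 3"
      "deg V E y2 = 4" "deg V E z2 = 4"
  shows "boundary_reducible V E {x1, y1, z1, w1, x2, y2, z2, w2}
      ({x1, y1, z1, w1, x2, y2, z2, w2} - {w1, w2}) 4"
    (is "boundary_reducible V E ?S ?R 4")
proof -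
  note [simp] = distinct_both_ways[OF nq, simplified] dia_adj[OF G D1] dia_adj[OF G D2] adj
    adj[THEN graph_symD[OF G]] deg ext_edge_def
  have "fix_colorable V E ?R 4 x1"
    by (rule fix_colorable_by_cert[OF G, where cs = "[(x2, []), (y2, [x2]), (y1, [y2]),
      (z1, [y1]), (z2, [x2, y2])]"]) auto
  moreover have "fix_colorable V E ?R 4 y1"
    by (rule fix_colorable_by_cert[OF G, where cs = "[(x1, []), (x2, []), (y2, [x2]),
      (z1, [x1]), (z2, [x2, y2])]"]) auto
  moreover have "fix_colorable V E ?R 4 z1"
    by (rule fix_colorable_by_cert[OF G, where cs = "[(x1, []), (x2, []), (y1, [x1]),
      (y2, [x2, y1]), (z2, [x2, y2])]"]) auto
  moreover have "fix_colorable V E ?R 4 x2"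
    by (rule fix_colorable_by_cert[OF G, where cs = "[(x1, []), (y1, [x1]), (y2, [y1]),
      (z1, [x1, y1]), (z2, [y2])]"]) auto
  moreover have "fix_colorable V E ?R 4 y2"
    by (rule fix_colorable_by_cert[OF G, where cs = "[(x1, []), (x2, []), (y1, [x1]),
      (z1, [x1, y1]), (z2, [x2])]"]) auto
  moreover have "fix_colorable V E ?R 4 z2"
    by (rule fix_colorable_by_cert[OF G, where cs = "[(x1, []), (x2, []), (y1, [x1]),
      (y2, [x2, y1]), (z1, [x1, y1])]"]) auto
  moreover have "\<not> F_free_set E ?S {x1, y1}"
    by (rule not_F_free_set_B5I[of "Some x1" "Some y1" "Some w1" None "Some z1"]) auto
  moreover have "\<not> F_free_set E ?S {x1, z1}"
    by (rule not_F_free_set_cycleI[of "[Some w1, Some x1, None, Some z1, Some y1]"]) auto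
  moreover have "\<not> F_free_set E ?S {x1, x2}"
    by (rule not_F_free_set_cycleI[of "[Some x1, Some y1, Some y2, Some x2, None]"]) auto
  moreover have "\<not> F_free_set E ?S {x1, y2}"
    by (rule not_F_free_set_cycleI[of "[Some w1, Some x1, None, Some y2, Some y1]"]) auto
  moreover have "\<not> F_free_set E ?S {x1, z2}"
    by (rule not_F_free_set_cycleI[of "[Some x1, Some y1, Some y2, Some z2, None]"]) auto
  moreover have "\<not> F_free_set E ?S {y1, z1}"
    by (rule not_F_free_set_cycleI[of "[Some w1, Some x1, Some z1, None, Some y1]"]) auto
  moreover have "\<not> F_free_set E ?S {y1, x2}"
    by (rule not_F_free_set_cycleI[of "[Some w2, Some x2, None, Some y1, Some y2]"]) auto
  moreover have "forb_colorable V E ?R 4 {y1, y2}"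
    by (rule forb_colorable_by_cert[OF G, where cs = "[(x1, []), (x2, []), (z1, [x1]),
      (y1, [x1, z1]), (y2, [x2, y1]), (z2, [x2, y2])]"]) auto
  moreover have "\<not> F_free_set E ?S {y1, z2}"
    by (rule not_F_free_set_cycleI[of "[Some x2, Some y2, Some y1, None, Some z2]"]) auto
  moreover have "\<not> F_free_set E ?S {z1, x2}"
    by (rule not_F_free_set_cycleI[of "[Some x2, Some y2, Some y1, Some z1, None]"]) auto
  moreover have "\<not> F_free_set E ?S {z1, y2}"
    by (rule not_F_free_set_cycleI[of "[Some x1, Some y1, Some y2, None, Some z1]"]) auto
  moreover have "\<not> F_free_set E ?S {z1, z2}"
    by (rule not_F_free_set_cycleI[of "[Some y1, Some y2, Some z2, None, Some z1]"]) auto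
  moreover have "\<not> F_free_set E ?S {x2, y2}"
    by (rule not_F_free_set_B5I[of "Some x2" "Some y2" "Some w2" None "Some z2"]) auto
  moreover have "\<not> F_free_set E ?S {x2, z2}"
    by (rule not_F_free_set_cycleI[of "[Some w2, Some x2, None, Some z2, Some y2]"]) auto
  moreover have "\<not> F_free_set E ?S {y2, z2}"
    by (rule not_F_free_set_cycleI[of "[Some w2, Some x2, Some z2, None, Some y2]"]) auto
  moreover have "forb_colorable V E ?R 4 {x1}"
    by (rule forb_colorable_by_cert[OF G, where cs = "[(x2, []), (y2, [x2]), (y1, [y2]),
      (x1, [y1]), (z1, [y1, x1]), (z2, [x2, y2])]"]) auto
  moreover have "forb_colorable V E ?R 4 {y1}"
    by (rule forb_colorable_subset[OF _ \<open>forb_colorable V E ?R 4 {y1, y2}\<close>]) simp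
  moreover have "forb_colorable V E ?R 4 {z1}"
    by (rule forb_colorable_by_cert[OF G, where cs = "[(x1, []), (x2, []), (y1, [x1]),
      (y2, [x2, y1]), (z1, [x1, y1]), (z2, [x2, y2])]"]) auto
  moreover have "forb_colorable V E ?R 4 {x2}"
    by (rule forb_colorable_by_cert[OF G, where cs = "[(x1, []), (y1, [x1]), (y2, [y1]),
      (x2, [y2]), (z1, [x1, y1]), (z2, [y2, x2])]"]) auto
  moreover have "forb_colorable V E ?R 4 {y2}"
    by (rule forb_colorable_subset[OF _ \<open>forb_colorable V E ?R 4 {y1, y2}\<close>]) simp
  moreover have "forb_colorable V E ?R 4 {z2}"
    by (rule forb_colorable_by_cert[OF G, where cs = "[(x1, []), (x2, []), (y1, [x1]),
      (y2, [x2, y1]), (z1, [x1, y1]), (z2, [x2, y2])]"]) auto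
  ultimately show ?thesis
    by (intro boundary_reducible_4I[where rs = "[x1, y1, z1, x2, y2, z2]"]) auto
qed

lemma C10_reducible:
  assumes G: "graph V E"
    and nq: "distinct [a, b, p, q, c, s, v]"
    and D1: "dia E a b p q"
    and D2: "dia E q c s v"
    and deg: "deg V E a = 4" "deg V E b = 3" "deg V E q = 5" "deg V E c = 3" "deg V E s = 4"
  shows "boundary_reducible V E {a, b, p, q, c, s, v} ({a, b, p, q, c, s, v} - {p, v}) 4"
    (is "boundary_reducible V E ?S ?R 4")
proof -
  note [simp] = distinct_both_ways[OF nq, simplified] dia_adj[OF G D1] dia_adj[OF G D2]
    deg ext_edge_def
  have "fix_colorable V E ?R 4 a"
    by (rule fix_colorable_by_cert[OF G, where cs = "[(b, []), (c, []), (q, [b, c]),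
      (s, [c, q])]"]) auto
  moreover have "fix_colorable V E ?R 4 b"
    by (rule fix_colorable_by_cert[OF G, where cs = "[(c, []), (s, [c]), (q, [c, s]),
      (a, [q])]"]) auto
  moreover have "fix_colorable V E ?R 4 q"
    by (rule fix_colorable_by_cert[OF G, where cs = "[(b, []), (a, [b]), (c, []),
      (s, [c])]"]) auto
  moreover have "fix_colorable V E ?R 4 c"
    by (rule fix_colorable_by_cert[OF G, where cs = "[(b, []), (a, [b]), (q, [b, a]),
      (s, [q])]"]) auto
  moreover have "fix_colorable V E ?R 4 s"
    by (rule fix_colorable_by_cert[OF G, where cs = "[(b, []), (a, [b]), (c, []),
      (q, [b, a, c])]"]) auto
  moreover have "\<not> F_free_set E ?S {a, b}"
    by (rule not_F_free_set_B5I[of "Some a" "Some b" "Some p" "Some q" None]) auto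
  moreover have "\<not> F_free_set E ?S {a, q}"
    by (rule not_F_free_set_cycleI[of "[Some a, Some p, Some b, Some q, None]"]) auto
  moreover have "\<not> F_free_set E ?S {a, c}"
    by (rule not_F_free_set_cycleI[of "[Some a, Some b, Some q, Some c, None]"]) auto
  moreover have "\<not> F_free_set E ?S {a, s}"
    by (rule not_F_free_set_cycleI[of "[Some a, Some b, Some q, Some s, None]"]) auto
  moreover have "\<not> F_free_set E ?S {b, q}"
    by (rule not_F_free_set_cycleI[of "[Some a, Some p, Some b, None, Some q]"]) auto
  moreover have "\<not> F_free_set E ?S {b, c}"
    by (rule not_F_free_set_cycleI[of "[Some a, Some b, None, Some c, Some q]"]) auto
  moreover have "\<not> F_free_set E ?S {b, s}"
    by (rule not_F_free_set_cycleI[of "[Some a, Some b, None, Some s, Some q]"]) auto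
  moreover have "\<not> F_free_set E ?S {q, c}"
    by (rule not_F_free_set_B5I[of "Some q" "Some c" "Some s" "Some v" None]) auto
  moreover have "\<not> F_free_set E ?S {q, s}"
    by (rule not_F_free_set_cycleI[of "[Some c, Some s, None, Some q, Some v]"]) auto
  moreover have "\<not> F_free_set E ?S {c, s}"
    by (rule not_F_free_set_cycleI[of "[Some c, Some v, Some q, Some s, None]"]) auto
  moreover have "forb_colorable V E ?R 4 {a}"
    by (rule forb_colorable_by_cert[OF G, where cs = "[(b, []), (c, []), (q, [b, c]),
      (a, [b, q]), (s, [c, q])]"]) auto
  moreover have "forb_colorable V E ?R 4 {b}"
    by (rule forb_colorable_by_cert[OF G, where cs = "[(c, []), (s, [c]), (q, [c, s]), (a, [q]),
      (b, [q, a])]"]) auto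
  moreover have "forb_colorable V E ?R 4 {q}"
    by (rule forb_colorable_by_cert[OF G, where cs = "[(b, []), (a, [b]), (c, []),
      (q, [b, a, c]), (s, [c, q])]"]) auto
  moreover have "forb_colorable V E ?R 4 {c}"
    by (rule forb_colorable_by_cert[OF G, where cs = "[(b, []), (a, [b]), (q, [b, a]), (c, [q]),
      (s, [q, c])]"]) auto
  moreover have "forb_colorable V E ?R 4 {s}"
    by (rule forb_colorable_by_cert[OF G, where cs = "[(b, []), (a, [b]), (c, []),
      (q, [b, a, c]), (s, [c, q])]"]) auto
  ultimately show ?thesis
    by (intro boundary_reducible_4I[where rs = "[a, b, q, c, s]"]) auto
qed

lemma C11_reducible:
  assumes G: "graph V E"
    and D: "dia E m1 m2 s1 s2"
    and u: "u \<notin> {m1, m2, s1, s2}"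
    and adj: "E u m1"
    and deg: "deg V E m1 = 4" "deg V E m2 = 4" "deg V E s1 = 3" "deg V E s2 = 4" "deg V E u = 3"
  shows "boundary_reducible V E {m1, m2, s1, s2, u} {m1, m2, s1, s2, u} 4"
    (is "boundary_reducible V E ?S ?R 4")
proof -
  have nq: "distinct [m1, m2, s1, s2, u]" using D u by (auto simp: dia_def)
  note [simp] = distinct_both_ways[OF nq, simplified] dia_adj[OF G D] adj
    adj[THEN graph_symD[OF G]] deg ext_edge_def
  have "fix_colorable V E ?R 4 m1"
    by (rule fix_colorable_by_cert[OF G, where cs = "[(s1, []), (m2, [s1]), (s2, [m2]),
      (u, [])]"]) auto
  moreover have "fix_colorable V E ?R 4 m2"
    by (rule fix_colorable_by_cert[OF G, where cs = "[(s1, []), (m1, [s1]), (s2, [m1]),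
      (u, [m1])]"]) auto
  moreover have "fix_colorable V E ?R 4 s1"
    by (rule fix_colorable_by_cert[OF G, where cs = "[(u, []), (m1, [u]), (m2, [m1]),
      (s2, [m1, m2])]"]) auto
  moreover have "fix_colorable V E ?R 4 s2"
    by (rule fix_colorable_by_cert[OF G, where cs = "[(s1, []), (m1, [s1]), (m2, [s1, m1]),
      (u, [m1])]"]) auto
  moreover have "fix_colorable V E ?R 4 u"
    by (rule fix_colorable_by_cert[OF G, where cs = "[(s1, []), (m1, [s1]), (m2, [s1, m1]),
      (s2, [m1, m2])]"]) auto
  moreover have "\<not> F_free_set E ?S {m1, m2}"
    by (rule not_F_free_set_B5I[of "Some m1" "Some m2" "Some s1" "Some s2" None]) auto
  moreover have "\<not> F_free_set E ?S {m1, s1}"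
    by (rule not_F_free_set_cycleI[of "[Some m1, Some s2, Some m2, Some s1, None]"]) auto
  moreover have "\<not> F_free_set E ?S {m1, s2}"
    by (rule not_F_free_set_cycleI[of "[Some m1, Some s1, Some m2, Some s2, None]"]) auto
  moreover have "forb_colorable V E ?R 4 {m1, u}"
    by (rule forb_colorable_by_cert[OF G, where cs = "[(s1, []), (m2, [s1]), (m1, [s1, m2]),
      (s2, [m2, m1]), (u, [m1])]"]) auto
  moreover have "\<not> F_free_set E ?S {m2, s1}"
    by (rule not_F_free_set_cycleI[of "[Some m1, Some s1, None, Some m2, Some s2]"]) auto
  moreover have "\<not> F_free_set E ?S {m2, s2}"
    by (rule not_F_free_set_cycleI[of "[Some m1, Some s1, Some m2, None, Some s2]"]) auto
  moreover have "\<not> F_free_set E ?S {m2, u}"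
    by (rule not_F_free_set_cycleI[of "[Some m1, Some s1, Some m2, None, Some u]"]) auto
  moreover have "\<not> F_free_set E ?S {s1, s2}"
    by (rule not_F_free_set_cycleI[of "[Some m1, Some m2, Some s1, None, Some s2]"]) auto
  moreover have "\<not> F_free_set E ?S {s1, u}"
    by (rule not_F_free_set_cycleI[of "[Some m1, Some m2, Some s1, None, Some u]"]) auto
  moreover have "\<not> F_free_set E ?S {s2, u}"
    by (rule not_F_free_set_cycleI[of "[Some m1, Some m2, Some s2, None, Some u]"]) auto
  moreover have "forb_colorable V E ?R 4 {m1}"
    by (rule forb_colorable_subset[OF _ \<open>forb_colorable V E ?R 4 {m1, u}\<close>]) simp
  moreover have "forb_colorable V E ?R 4 {m2}"
    by (rule forb_colorable_by_cert[OF G, where cs = "[(s1, []), (m1, [s1]), (m2, [s1, m1]),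
      (s2, [m1, m2]), (u, [m1])]"]) auto
  moreover have "forb_colorable V E ?R 4 {s1}"
    by (rule forb_colorable_by_cert[OF G, where cs = "[(u, []), (m1, [u]), (m2, [m1]),
      (s1, [m1, m2]), (s2, [m1, m2])]"]) auto
  moreover have "forb_colorable V E ?R 4 {s2}"
    by (rule forb_colorable_by_cert[OF G, where cs = "[(s1, []), (m1, [s1]), (m2, [s1, m1]),
      (s2, [m1, m2]), (u, [m1])]"]) auto
  moreover have "forb_colorable V E ?R 4 {u}"
    by (rule forb_colorable_subset[OF _ \<open>forb_colorable V E ?R 4 {m1, u}\<close>]) simp
  ultimately show ?thesis
    by (intro boundary_reducible_4I[where rs = "[m1, m2, s1, s2, u]"]) auto
qed

lemma C12_reducible:
  assumes G: "graph V E"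
    and nq: "distinct [x1, y1, z1, w1, m1, m2, s1, s2]"
    and D1: "dia E x1 y1 z1 w1"
    and D2: "dia E m1 m2 s1 s2"
    and adj: "E y1 m1"
    and deg: "deg V E x1 = 3" "deg V E y1 = 4" "deg V E z1 = 4" "deg V E m1 = 4"
      "deg V E m2 = 4" "deg V E s1 = 4" "deg V E s2 = 3"
  shows "boundary_reducible V E {x1, y1, z1, w1, m1, m2, s1, s2}
      ({x1, y1, z1, w1, m1, m2, s1, s2} - {w1}) 4"
    (is "boundary_reducible V E ?S ?R 4")
proof -
  note [simp] = distinct_both_ways[OF nq, simplified] dia_adj[OF G D1] dia_adj[OF G D2] adj
    adj[THEN graph_symD[OF G]] deg ext_edge_def
  have "fix_colorable V E ?R 4 x1"
    by (rule fix_colorable_by_cert[OF G, where cs = "[(s2, []), (m1, [s2]), (m2, [s2, m1]),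
      (s1, [m1, m2]), (y1, [m1]), (z1, [y1])]"]) auto
  moreover have "fix_colorable V E ?R 4 y1"
    by (rule fix_colorable_by_cert[OF G, where cs = "[(s2, []), (m1, [s2]), (m2, [s2, m1]),
      (s1, [m1, m2]), (x1, []), (z1, [x1])]"]) auto
  moreover have "fix_colorable V E ?R 4 z1"
    by (rule fix_colorable_by_cert[OF G, where cs = "[(s2, []), (m1, [s2]), (m2, [s2, m1]),
      (s1, [m1, m2]), (x1, []), (y1, [m1, x1])]"]) auto
  moreover have "fix_colorable V E ?R 4 m1"
    by (rule fix_colorable_by_cert[OF G, where cs = "[(s2, []), (m2, [s2]), (s1, [m2]),
      (x1, []), (y1, [x1]), (z1, [x1, y1])]"]) auto
  moreover have "fix_colorable V E ?R 4 m2"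
    by (rule fix_colorable_by_cert[OF G, where cs = "[(s2, []), (m1, [s2]), (s1, [m1]),
      (x1, []), (y1, [m1, x1]), (z1, [x1, y1])]"]) auto
  moreover have "fix_colorable V E ?R 4 s1"
    by (rule fix_colorable_by_cert[OF G, where cs = "[(s2, []), (m1, [s2]), (m2, [s2, m1]),
      (x1, []), (y1, [m1, x1]), (z1, [x1, y1])]"]) auto
  moreover have "fix_colorable V E ?R 4 s2"
    by (rule fix_colorable_by_cert[OF G, where cs = "[(x1, []), (y1, [x1]), (m1, [y1]),
      (m2, [m1]), (s1, [m1, m2]), (z1, [x1, y1])]"]) auto
  moreover have "\<not> F_free_set E ?S {x1, y1}"
    by (rule not_F_free_set_B5I[of "Some x1" "Some y1" "Some w1" None "Some z1"]) auto
  moreover have "\<not> F_free_set E ?S {x1, z1}"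
    by (rule not_F_free_set_cycleI[of "[Some w1, Some x1, None, Some z1, Some y1]"]) auto
  moreover have "\<not> F_free_set E ?S {x1, m1}"
    by (rule not_F_free_set_cycleI[of "[Some m1, Some y1, Some w1, Some x1, None]"]) auto
  moreover have "\<not> F_free_set E ?S {x1, m2}"
    by (rule not_F_free_set_cycleI[of "[Some m1, Some m2, None, Some x1, Some y1]"]) auto
  moreover have "\<not> F_free_set E ?S {x1, s1}"
    by (rule not_F_free_set_cycleI[of "[Some m1, Some s1, None, Some x1, Some y1]"]) auto
  moreover have "\<not> F_free_set E ?S {x1, s2}"
    by (rule not_F_free_set_cycleI[of "[Some m1, Some s2, None, Some x1, Some y1]"]) auto
  moreover have "\<not> F_free_set E ?S {y1, z1}"
    by (rule not_F_free_set_cycleI[of "[Some w1, Some x1, Some z1, None, Some y1]"]) auto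
  moreover have "forb_colorable V E ?R 4 {y1, m1}"
    by (rule forb_colorable_by_cert[OF G, where cs = "[(s2, []), (m2, [s2]), (m1, [s2, m2]),
      (s1, [m2, m1]), (x1, []), (y1, [m1, x1]), (z1, [x1, y1])]"]) auto
  moreover have "\<not> F_free_set E ?S {y1, m2}"
    by (rule not_F_free_set_cycleI[of "[Some m1, Some s1, Some m2, None, Some y1]"]) auto
  moreover have "\<not> F_free_set E ?S {y1, s1}"
    by (rule not_F_free_set_cycleI[of "[Some m1, Some m2, Some s1, None, Some y1]"]) auto
  moreover have "\<not> F_free_set E ?S {y1, s2}"
    by (rule not_F_free_set_cycleI[of "[Some m1, Some m2, Some s2, None, Some y1]"]) auto
  moreover have "\<not> F_free_set E ?S {z1, m1}"
    by (rule not_F_free_set_cycleI[of "[Some m1, Some y1, Some x1, Some z1, None]"]) auto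
  moreover have "\<not> F_free_set E ?S {z1, m2}"
    by (rule not_F_free_set_cycleI[of "[Some m1, Some m2, None, Some z1, Some y1]"]) auto
  moreover have "\<not> F_free_set E ?S {z1, s1}"
    by (rule not_F_free_set_cycleI[of "[Some m1, Some s1, None, Some z1, Some y1]"]) auto
  moreover have "\<not> F_free_set E ?S {z1, s2}"
    by (rule not_F_free_set_cycleI[of "[Some m1, Some s2, None, Some z1, Some y1]"]) auto
  moreover have "\<not> F_free_set E ?S {m1, m2}"
    by (rule not_F_free_set_B5I[of "Some m1" "Some m2" "Some s1" "Some s2" None]) auto
  moreover have "\<not> F_free_set E ?S {m1, s1}"
    by (rule not_F_free_set_cycleI[of "[Some m1, Some s2, Some m2, Some s1, None]"]) auto
  moreover have "\<not> F_free_set E ?S {m1, s2}"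
    by (rule not_F_free_set_cycleI[of "[Some m1, Some s1, Some m2, Some s2, None]"]) auto
  moreover have "\<not> F_free_set E ?S {m2, s1}"
    by (rule not_F_free_set_cycleI[of "[Some m1, Some s1, None, Some m2, Some s2]"]) auto
  moreover have "\<not> F_free_set E ?S {m2, s2}"
    by (rule not_F_free_set_cycleI[of "[Some m1, Some s1, Some m2, None, Some s2]"]) auto
  moreover have "\<not> F_free_set E ?S {s1, s2}"
    by (rule not_F_free_set_cycleI[of "[Some m1, Some m2, Some s1, None, Some s2]"]) auto
  moreover have "forb_colorable V E ?R 4 {x1}"
    by (rule forb_colorable_by_cert[OF G, where cs = "[(s2, []), (m1, [s2]), (m2, [s2, m1]),
      (s1, [m1, m2]), (y1, [m1]), (x1, [y1]), (z1, [y1, x1])]"]) auto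
  moreover have "forb_colorable V E ?R 4 {y1}"
    by (rule forb_colorable_subset[OF _ \<open>forb_colorable V E ?R 4 {y1, m1}\<close>]) simp
  moreover have "forb_colorable V E ?R 4 {z1}"
    by (rule forb_colorable_by_cert[OF G, where cs = "[(s2, []), (m1, [s2]), (m2, [s2, m1]),
      (s1, [m1, m2]), (x1, []), (y1, [m1, x1]), (z1, [x1, y1])]"]) auto
  moreover have "forb_colorable V E ?R 4 {m1}"
    by (rule forb_colorable_subset[OF _ \<open>forb_colorable V E ?R 4 {y1, m1}\<close>]) simp
  moreover have "forb_colorable V E ?R 4 {m2}"
    by (rule forb_colorable_by_cert[OF G, where cs = "[(s2, []), (m1, [s2]), (m2, [s2, m1]),
      (s1, [m1, m2]), (x1, []), (y1, [m1, x1]), (z1, [x1, y1])]"]) auto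
  moreover have "forb_colorable V E ?R 4 {s1}"
    by (rule forb_colorable_by_cert[OF G, where cs = "[(s2, []), (m1, [s2]), (m2, [s2, m1]),
      (s1, [m1, m2]), (x1, []), (y1, [m1, x1]), (z1, [x1, y1])]"]) auto
  moreover have "forb_colorable V E ?R 4 {s2}"
    by (rule forb_colorable_by_cert[OF G, where cs = "[(x1, []), (y1, [x1]), (m1, [y1]),
      (m2, [m1]), (s1, [m1, m2]), (s2, [m1, m2]), (z1, [x1, y1])]"]) auto
  ultimately show ?thesis
    by (intro boundary_reducible_4I[where rs = "[x1, y1, z1, m1, m2, s1, s2]"]) auto
qed

lemma C13_reducible:
  assumes G: "graph V E"
    and nq: "distinct [a, b, c, x, e, f, g, h, i, j]"
    and D1: "dia E a b c x"
    and D2: "dia E c e f g"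
    and D3: "dia E x h i j"
    and deg: "deg V E a = 3" "deg V E b = 5" "deg V E c = 5" "deg V E x = 5" "deg V E e = 3"
      "deg V E f = 4" "deg V E h = 3" "deg V E i = 4"
  shows "boundary_reducible V E {a, b, c, x, e, f, g, h, i, j}
      ({a, b, c, x, e, f, g, h, i, j} - {g, j}) 4"
    (is "boundary_reducible V E ?S ?R 4")
proof -
  note [simp] = distinct_both_ways[OF nq, simplified] dia_adj[OF G D1] dia_adj[OF G D2]
    dia_adj[OF G D3] deg ext_edge_def
  have "fix_colorable V E ?R 4 a"
    by (rule fix_colorable_by_cert[OF G, where cs = "[(e, []), (f, [e]), (c, [e, f]), (h, []),
      (i, [h]), (x, [h, i]), (b, [c, x])]"]) auto
  moreover have "fix_colorable V E ?R 4 b"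
    by (rule fix_colorable_by_cert[OF G, where cs = "[(a, []), (e, []), (c, [a, e]),
      (f, [e, c]), (h, []), (i, [h]), (x, [a, h, i])]"]) auto
  moreover have "fix_colorable V E ?R 4 c"
    by (rule fix_colorable_by_cert[OF G, where cs = "[(a, []), (e, []), (f, [e]), (h, []),
      (i, [h]), (x, [a, h, i]), (b, [a, x])]"]) auto
  moreover have "fix_colorable V E ?R 4 x"
    by (rule fix_colorable_by_cert[OF G, where cs = "[(a, []), (e, []), (c, [a, e]),
      (b, [a, c]), (f, [e, c]), (h, []), (i, [h])]"]) auto
  moreover have "fix_colorable V E ?R 4 e"
    by (rule fix_colorable_by_cert[OF G, where cs = "[(a, []), (h, []), (i, [h]),
      (x, [a, h, i]), (b, [a, x]), (c, [a, b]), (f, [c])]"]) auto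
  moreover have "fix_colorable V E ?R 4 f"
    by (rule fix_colorable_by_cert[OF G, where cs = "[(a, []), (e, []), (c, [a, e]),
      (b, [a, c]), (h, []), (i, [h]), (x, [a, b, h, i])]"]) auto
  moreover have "fix_colorable V E ?R 4 h"
    by (rule fix_colorable_by_cert[OF G, where cs = "[(a, []), (e, []), (c, [a, e]),
      (b, [a, c]), (f, [e, c]), (x, [a, b]), (i, [x])]"]) auto
  moreover have "fix_colorable V E ?R 4 i"
    by (rule fix_colorable_by_cert[OF G, where cs = "[(a, []), (e, []), (c, [a, e]),
      (b, [a, c]), (f, [e, c]), (h, []), (x, [a, b, h])]"]) auto
  moreover have "\<not> F_free_set E ?S {a, b}"
    by (rule not_F_free_set_B5I[of "Some a" "Some b" "Some c" "Some x" None]) auto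
  moreover have "\<not> F_free_set E ?S {a, c}"
    by (rule not_F_free_set_cycleI[of "[Some a, Some x, Some b, Some c, None]"]) auto
  moreover have "\<not> F_free_set E ?S {a, x}"
    by (rule not_F_free_set_cycleI[of "[Some a, Some c, Some b, Some x, None]"]) auto
  moreover have "\<not> F_free_set E ?S {a, e}"
    by (rule not_F_free_set_cycleI[of "[Some a, Some b, Some c, Some e, None]"]) auto
  moreover have "\<not> F_free_set E ?S {a, f}"
    by (rule not_F_free_set_cycleI[of "[Some a, Some b, Some c, Some f, None]"]) auto
  moreover have "\<not> F_free_set E ?S {a, h}"
    by (rule not_F_free_set_cycleI[of "[Some a, Some b, Some x, Some h, None]"]) auto
  moreover have "\<not> F_free_set E ?S {a, i}"
    by (rule not_F_free_set_cycleI[of "[Some a, Some b, Some x, Some i, None]"]) auto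
  moreover have "\<not> F_free_set E ?S {b, c}"
    by (rule not_F_free_set_cycleI[of "[Some a, Some c, None, Some b, Some x]"]) auto
  moreover have "\<not> F_free_set E ?S {b, x}"
    by (rule not_F_free_set_cycleI[of "[Some a, Some c, Some b, None, Some x]"]) auto
  moreover have "\<not> F_free_set E ?S {b, e}"
    by (rule not_F_free_set_cycleI[of "[Some a, Some b, None, Some e, Some c]"]) auto
  moreover have "\<not> F_free_set E ?S {b, f}"
    by (rule not_F_free_set_cycleI[of "[Some a, Some b, None, Some f, Some c]"]) auto
  moreover have "\<not> F_free_set E ?S {b, h}"
    by (rule not_F_free_set_cycleI[of "[Some a, Some b, None, Some h, Some x]"]) auto
  moreover have "\<not> F_free_set E ?S {b, i}"
    by (rule not_F_free_set_cycleI[of "[Some a, Some b, None, Some i, Some x]"]) auto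
  moreover have "\<not> F_free_set E ?S {c, x}"
    by (rule not_F_free_set_cycleI[of "[Some a, Some b, Some c, None, Some x]"]) auto
  moreover have "\<not> F_free_set E ?S {c, e}"
    by (rule not_F_free_set_B5I[of "Some c" "Some e" "Some f" "Some g" None]) auto
  moreover have "\<not> F_free_set E ?S {c, f}"
    by (rule not_F_free_set_cycleI[of "[Some c, Some g, Some e, Some f, None]"]) auto
  moreover have "\<not> F_free_set E ?S {c, h}"
    by (rule not_F_free_set_cycleI[of "[Some a, Some c, None, Some h, Some x]"]) auto
  moreover have "\<not> F_free_set E ?S {c, i}"
    by (rule not_F_free_set_cycleI[of "[Some a, Some c, None, Some i, Some x]"]) auto
  moreover have "\<not> F_free_set E ?S {x, e}"
    by (rule not_F_free_set_cycleI[of "[Some a, Some c, Some e, None, Some x]"]) auto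
  moreover have "\<not> F_free_set E ?S {x, f}"
    by (rule not_F_free_set_cycleI[of "[Some a, Some c, Some f, None, Some x]"]) auto
  moreover have "\<not> F_free_set E ?S {x, h}"
    by (rule not_F_free_set_B5I[of "Some x" "Some h" "Some i" "Some j" None]) auto
  moreover have "\<not> F_free_set E ?S {x, i}"
    by (rule not_F_free_set_cycleI[of "[Some h, Some i, None, Some x, Some j]"]) auto
  moreover have "\<not> F_free_set E ?S {e, f}"
    by (rule not_F_free_set_cycleI[of "[Some c, Some f, None, Some e, Some g]"]) auto
  moreover have "\<not> F_free_set E ?S {e, h}"
    by (rule not_F_free_set_cycleI[of "[Some a, Some c, Some e, None, Some h, Some x]"]) auto
  moreover have "\<not> F_free_set E ?S {e, i}"
    by (rule not_F_free_set_cycleI[of "[Some a, Some c, Some e, None, Some i, Some x]"]) auto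
  moreover have "\<not> F_free_set E ?S {f, h}"
    by (rule not_F_free_set_cycleI[of "[Some a, Some c, Some f, None, Some h, Some x]"]) auto
  moreover have "\<not> F_free_set E ?S {f, i}"
    by (rule not_F_free_set_cycleI[of "[Some a, Some c, Some f, None, Some i, Some x]"]) auto
  moreover have "\<not> F_free_set E ?S {h, i}"
    by (rule not_F_free_set_cycleI[of "[Some h, Some j, Some x, Some i, None]"]) auto
  moreover have "forb_colorable V E ?R 4 {a}"
    by (rule forb_colorable_by_cert[OF G, where cs = "[(e, []), (f, [e]), (c, [e, f]), (a, [c]),
      (b, [c, a]), (h, []), (i, [h]), (x, [a, b, h, i])]"]) auto
  moreover have "forb_colorable V E ?R 4 {b}"
    by (rule forb_colorable_by_cert[OF G, where cs = "[(a, []), (e, []), (c, [a, e]),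
      (f, [e, c]), (h, []), (i, [h]), (x, [a, h, i]), (b, [a, c, x])]"]) auto
  moreover have "forb_colorable V E ?R 4 {c}"
    by (rule forb_colorable_by_cert[OF G, where cs = "[(a, []), (e, []), (f, [e]),
      (c, [a, e, f]), (b, [a, c]), (h, []), (i, [h]), (x, [a, b, h, i])]"]) auto
  moreover have "forb_colorable V E ?R 4 {x}"
    by (rule forb_colorable_by_cert[OF G, where cs = "[(a, []), (e, []), (c, [a, e]),
      (b, [a, c]), (f, [e, c]), (h, []), (i, [h]), (x, [a, b, h, i])]"]) auto
  moreover have "forb_colorable V E ?R 4 {e}"
    by (rule forb_colorable_by_cert[OF G, where cs = "[(a, []), (h, []), (i, [h]),
      (x, [a, h, i]), (b, [a, x]), (c, [a, b]), (e, [c]), (f, [c, e])]"]) auto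
  moreover have "forb_colorable V E ?R 4 {f}"
    by (rule forb_colorable_by_cert[OF G, where cs = "[(a, []), (e, []), (c, [a, e]),
      (b, [a, c]), (f, [e, c]), (h, []), (i, [h]), (x, [a, b, h, i])]"]) auto
  moreover have "forb_colorable V E ?R 4 {h}"
    by (rule forb_colorable_by_cert[OF G, where cs = "[(a, []), (e, []), (c, [a, e]),
      (b, [a, c]), (f, [e, c]), (x, [a, b]), (h, [x]), (i, [x, h])]"]) auto
  moreover have "forb_colorable V E ?R 4 {i}"
    by (rule forb_colorable_by_cert[OF G, where cs = "[(a, []), (e, []), (c, [a, e]),
      (b, [a, c]), (f, [e, c]), (h, []), (x, [a, b, h]), (i, [h, x])]"]) auto
  ultimately show ?thesis
    by (intro boundary_reducible_4I[where rs = "[a, b, c, x, e, f, h, i]"]) auto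
qed

theorem mainTheorem6:
  fixes V :: "'a set" and E :: "'a \<Rightarrow> 'a \<Rightarrow> bool" and S B :: "'a set"
  assumes "graph V E"
    and "F_free V E"
    and "config V E S B"
  shows "boundary_reducible V E S (S - B) 4"
  apply (insert assms(3), unfold config_def Let_def)
  apply (elim disjE exE conjE; hypsubst; (unfold Diff_empty)?)
  apply (blast intro: assms(1) C1_reducible C2_reducible C3_reducible C4_reducible C5_reducible
      C6_reducible C7_reducible C8_reducible C9_reducible C10_reducible C11_reducible
      C12_reducible C13_reducible)+
  done

end
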